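(* Let $A\in\mathbb{C}^{m\times n}_r$ satisfy ${\rm rank}(AA^{\sim})={\rm rank}(A^{\sim}A)={\rm rank}(A)$ and be partitioned as $A=\left(\begin{array}{cc}A_1 & A_2\\ A_3 & A_4\end{array}\right)$, where $A_1\in\mathbb{C}^{r\times r}$ is nonsingular, $A_2\in\mathbb{C}^{r\times(n-r)}$, $A_3\in\mathbb{C}^{(m-r)\times r}$, $A_4\in\mathbb{C}^{(m-r)\times(n-r)}$. Then \[ A^{\mathfrak{m}}=\left(\begin{array}{cc}A_1 & A_2\end{array}\right)^{\sim}\left[\left(\begin{array}{c}A_1\\ A_3\end{array}\right)^{\sim}A\left(\begin{array}{cc}A_1 & A_2\end{array}\right)^{\sim}\right]^{-1}\left(\begin{array}{c}A_1\\ A_3\end{array}\right)^{\sim}. \]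
   Context: The Minkowski metric matrix of order $k$ is $\left(\begin{array}{cc}1&0\\0&-I_{k-1}\end{array}\right)$; the Minkowski adjoint of $M\in\mathbb{C}^{p\times q}$ is $M^{\sim}=G_qM^*G_p$ with $G_q,G_p$ the Minkowski metric matrices of orders $q$ and $p$. The Minkowski inverse $A^{\mathfrak{m}}$ is the unique $X$ with $AXA=A$, $XAX=X$, $(AX)^{\sim}=AX$, $(XA)^{\sim}=XA$. *)

theory Defs
  imports "Jordan_Normal_Form.Schur_Decomposition" "Jordan_Normal_Form.DL_Rank"
begin

definition minkowski_metric :: "nat \<Rightarrow> complex mat" where
  "minkowski_metric k = mat k k (\<lambda>(i, j). if i = j then (if i = 0 then 1 else -1) else 0)"

definition mink_adj :: "complex mat \<Rightarrow> complex mat" where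
  "mink_adj M = minkowski_metric (dim_col M) * mat_adjoint M * minkowski_metric (dim_row M)"

definition mrank :: "complex mat \<Rightarrow> nat" where
  "mrank A = vec_space.rank (dim_row A) A"

definition is_minkowski_inverse :: "complex mat \<Rightarrow> complex mat \<Rightarrow> bool" where
  "is_minkowski_inverse A X \<longleftrightarrow>
     X \<in> carrier_mat (dim_col A) (dim_row A) \<and>
     A * X * A = A \<and> X * A * X = X \<and>
     mink_adj (A * X) = A * X \<and> mink_adj (X * A) = X * A"

definition minkowski_inverse :: "complex mat \<Rightarrow> complex mat" where
  "minkowski_inverse A = (THE X. is_minkowski_inverse A X)"

definition mat_inv :: "complex mat \<Rightarrow> complex mat" where
  "mat_inv C = (THE B. B \<in> carrier_mat (dim_row C) (dim_row C) \<and> inverts_mat C B \<and> inverts_mat B C)"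

definition row_block :: "complex mat \<Rightarrow> complex mat \<Rightarrow> complex mat" where
  "row_block B1 B2 = four_block_mat B1 B2 (0\<^sub>m 0 (dim_col B1)) (0\<^sub>m 0 (dim_col B2))"

end

(*
  Since rank A = r and A1 is nonsingular, the leading columns C = (A1; A3) are linearly
  independent and span the column space of A, so A = C K with K of full row rank r, and the
  leading rows are (A1 A2) = A1 K.  The rank conditions on A A~ = C (K K~) C~ and
  A~ A = K~ (C~ C) K force the Minkowski Gram matrices C~ C and K K~ to be nonsingular;
  then X = K~ (K K~)^-1 (C~ C)^-1 C~ satisfies the four defining equations (both A X = C (C~ C)^-1 C~
  and X A = K~ (K K~)^-1 K are Minkowski self-adjoint), and in the stated formula the factor A1~
  cancels against its inverse.
*)
theory Submission
  imports Defs
begin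

section \<open>The Minkowski adjoint\<close>

definition minkowski_sign :: "nat \<Rightarrow> complex" where
  "minkowski_sign i = (if i = 0 then 1 else -1)"

lemma minkowski_sign_square [simp]: "minkowski_sign i * minkowski_sign i = 1"
  by (simp add: minkowski_sign_def)

lemma cnj_minkowski_sign [simp]: "cnj (minkowski_sign i) = minkowski_sign i"
  by (simp add: minkowski_sign_def)

lemma minkowski_metric_dim [simp]:
  "dim_row (minkowski_metric k) = k" "dim_col (minkowski_metric k) = k"
  by (simp_all add: minkowski_metric_def)

lemma minkowski_metric_index:
  "i < k \<Longrightarrow> j < k \<Longrightarrow> minkowski_metric k $$ (i, j) = (if i = j then minkowski_sign i else 0)"
  by (simp add: minkowski_metric_def minkowski_sign_def)

lemma minkowski_metric_mult_left:
  assumes "M \<in> carrier_mat k c"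
  shows "minkowski_metric k * M = mat k c (\<lambda>(i, j). minkowski_sign i * M $$ (i, j))"
proof (rule eq_matI)
  fix i j assume "i < dim_row (mat k c (\<lambda>(i, j). minkowski_sign i * M $$ (i, j)))"
    "j < dim_col (mat k c (\<lambda>(i, j). minkowski_sign i * M $$ (i, j)))"
  with assms show "(minkowski_metric k * M) $$ (i, j) = mat k c (\<lambda>(i, j). minkowski_sign i * M $$ (i, j)) $$ (i, j)"
    by (simp add: scalar_prod_def minkowski_metric_index if_distrib[of "\<lambda>x. x * _"] cong: if_cong)
qed (use assms in auto)

lemma minkowski_metric_mult_right:
  assumes "M \<in> carrier_mat k c"
  shows "M * minkowski_metric c = mat k c (\<lambda>(i, j). M $$ (i, j) * minkowski_sign j)"
proof (rule eq_matI)
  fix i j assume "i < dim_row (mat k c (\<lambda>(i, j). M $$ (i, j) * minkowski_sign j))"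
    "j < dim_col (mat k c (\<lambda>(i, j). M $$ (i, j) * minkowski_sign j))"
  with assms show "(M * minkowski_metric c) $$ (i, j) = mat k c (\<lambda>(i, j). M $$ (i, j) * minkowski_sign j) $$ (i, j)"
    by (simp add: scalar_prod_def minkowski_metric_index if_distrib[of "\<lambda>x. _ * x"] cong: if_cong)
qed (use assms in auto)

lemma mink_adj_index:
  "mink_adj M = mat (dim_col M) (dim_row M) (\<lambda>(i, j). minkowski_sign i * minkowski_sign j * cnj (M $$ (j, i)))"
proof -
  have "mat_adjoint M = mat (dim_col M) (dim_row M) (\<lambda>(i, j). cnj (M $$ (j, i)))"
    by (rule eq_matI) (auto simp: mat_adjoint_def mat_of_rows_def)
  then show ?thesis
    unfolding mink_adj_def
    by (subst minkowski_metric_mult_left, force, subst minkowski_metric_mult_right, force)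
      (rule eq_matI, auto)
qed

lemma mink_adj_dim [simp]: "dim_row (mink_adj M) = dim_col M" "dim_col (mink_adj M) = dim_row M"
  by (simp_all add: mink_adj_index)

lemma mink_adj_carrier [simp]: "mink_adj M \<in> carrier_mat (dim_col M) (dim_row M)"
  by (rule carrier_matI) simp_all

lemma mink_adj_mink_adj [simp]: "mink_adj (mink_adj M) = M"
  by (rule eq_matI) (auto simp: mink_adj_index minkowski_sign_def)

lemma mink_adj_one [simp]: "mink_adj (1\<^sub>m k) = 1\<^sub>m k"
  by (rule eq_matI) (auto simp: mink_adj_index)

lemma mink_adj_mult:
  assumes "dim_col A = dim_row B"
  shows "mink_adj (A * B) = mink_adj B * mink_adj A"
proof (rule eq_matI)
  fix i j assume "i < dim_row (mink_adj B * mink_adj A)" "j < dim_col (mink_adj B * mink_adj A)"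
  then have i: "i < dim_col B" and j: "j < dim_row A" by auto
  let ?s = minkowski_sign
  have "mink_adj (A * B) $$ (i, j) = (\<Sum>l<dim_row B. ?s i * ?s j * cnj (A $$ (j, l) * B $$ (l, i)))"
    using i j assms by (simp add: mink_adj_index scalar_prod_def sum_distrib_left atLeast0LessThan)
  also have "\<dots> = (\<Sum>l<dim_row B. (?s i * ?s l * cnj (B $$ (l, i))) * (?s l * ?s j * cnj (A $$ (j, l))))"
  proof (rule sum.cong)
    fix l
    have "?s i * ?s j * cnj (A $$ (j, l) * B $$ (l, i)) =
        ?s i * (?s l * ?s l) * ?s j * cnj (B $$ (l, i)) * cnj (A $$ (j, l))"
      by simp
    then show "?s i * ?s j * cnj (A $$ (j, l) * B $$ (l, i)) =
        ?s i * ?s l * cnj (B $$ (l, i)) * (?s l * ?s j * cnj (A $$ (j, l)))"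
      by (simp only: ac_simps)
  qed simp
  also have "\<dots> = (mink_adj B * mink_adj A) $$ (i, j)"
    using i j assms by (simp add: mink_adj_index scalar_prod_def atLeast0LessThan)
  finally show "mink_adj (A * B) $$ (i, j) = (mink_adj B * mink_adj A) $$ (i, j)" .
qed (use assms in auto)

section \<open>Inverses of square matrices\<close>

lemma assoc_mult_mat_dims:
  fixes A B C :: "'a :: semiring_0 mat"
  assumes "dim_col A = dim_row B" and "dim_col B = dim_row C"
  shows "A * B * C = A * (B * C)"
  using assms by (intro assoc_mult_mat[of A "dim_row A" "dim_row B" B "dim_row C" C "dim_col C"])
    (auto intro: carrier_matI)

lemma mult_cancel_left_inverse:
  fixes A B Z :: "'a :: semiring_1 mat"
  assumes "B * A = 1\<^sub>m k" and "dim_col B = dim_row A" and "dim_row Z = k"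
  shows "B * (A * Z) = Z"
proof -
  have "dim_col A = k"
    using arg_cong[OF assms(1), of dim_col] by simp
  with assms show ?thesis
    by (simp flip: assoc_mult_mat_dims)
qed

lemma mat_inv_eqI:
  assumes M: "M \<in> carrier_mat k k" and B: "B \<in> carrier_mat k k"
    and MB: "M * B = 1\<^sub>m k" and BM: "B * M = 1\<^sub>m k"
  shows "mat_inv M = B"
  unfolding mat_inv_def
proof (rule the_equality)
  fix B' assume "B' \<in> carrier_mat (dim_row M) (dim_row M) \<and> inverts_mat M B' \<and> inverts_mat B' M"
  with M have B': "B' \<in> carrier_mat k k" and B'M: "B' * M = 1\<^sub>m k"
    by (auto simp: inverts_mat_def)
  have "B' = B' * M * B"
    using B' B MB by (simp add: assoc_mult_mat[OF B' M B])
  then show "B' = B"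
    using B B'M by simp
qed (use M B MB BM in \<open>auto simp: inverts_mat_def\<close>)

lemma invertible_matI:
  assumes "M \<in> carrier_mat k k" and "B \<in> carrier_mat k k" and "M * B = 1\<^sub>m k" and "B * M = 1\<^sub>m k"
  shows "invertible_mat M"
  using assms by (auto simp: invertible_mat_def inverts_mat_def)

lemma invertible_mat_inverse:
  assumes "invertible_mat M" and M: "M \<in> carrier_mat k k"
  shows "mat_inv M \<in> carrier_mat k k" "M * mat_inv M = 1\<^sub>m k" "mat_inv M * M = 1\<^sub>m k"
proof -
  from assms obtain B where MB: "M * B = 1\<^sub>m k" and BM: "B * M = 1\<^sub>m (dim_row B)"
    by (auto simp: invertible_mat_def inverts_mat_def)
  from M MB BM have B: "B \<in> carrier_mat k k"
    by (metis carrier_matD carrier_matI index_mult_mat(2,3) index_one_mat(3))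
  with BM have "B * M = 1\<^sub>m k"
    by simp
  with M B MB have "mat_inv M = B"
    by (rule mat_inv_eqI)
  with B MB \<open>B * M = 1\<^sub>m k\<close> show "mat_inv M \<in> carrier_mat k k" "M * mat_inv M = 1\<^sub>m k" "mat_inv M * M = 1\<^sub>m k"
    by simp_all
qed

lemma invertible_mat_if_det_nonzero:
  fixes M :: "'a :: field mat"
  assumes M: "M \<in> carrier_mat k k" and "det M \<noteq> 0"
  shows "invertible_mat M"
proof -
  have "M \<in> Units (ring_mat TYPE('a) k ())"
    using det_non_zero_imp_unit[OF assms] .
  then obtain B where "B \<in> carrier_mat k k" "M * B = 1\<^sub>m k" "B * M = 1\<^sub>m k"
    by (auto simp: Units_def ring_mat_def)
  with M show ?thesis
    by (rule invertible_matI)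
qed

lemma mat_inv_mult:
  assumes "invertible_mat M" "invertible_mat N" and M: "M \<in> carrier_mat k k" and N: "N \<in> carrier_mat k k"
  shows "invertible_mat (M * N)" and "mat_inv (M * N) = mat_inv N * mat_inv M"
proof -
  note Mi = invertible_mat_inverse[OF assms(1) M] and Ni = invertible_mat_inverse[OF assms(2) N]
  have "M * N * (mat_inv N * mat_inv M) = M * (N * mat_inv N) * mat_inv M"
    "mat_inv N * mat_inv M * (M * N) = mat_inv N * (mat_inv M * M) * N"
    using M N Mi(1) Ni(1) by (simp_all add: assoc_mult_mat_dims)
  then have "M * N * (mat_inv N * mat_inv M) = 1\<^sub>m k" "mat_inv N * mat_inv M * (M * N) = 1\<^sub>m k"
    using M N Mi Ni by simp_all
  moreover have "M * N \<in> carrier_mat k k" "mat_inv N * mat_inv M \<in> carrier_mat k k"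
    using M N Mi(1) Ni(1) by auto
  ultimately show "invertible_mat (M * N)" "mat_inv (M * N) = mat_inv N * mat_inv M"
    by (simp_all add: invertible_matI mat_inv_eqI)
qed

lemma invertible_mat_mink_adj:
  assumes "invertible_mat M" and M: "M \<in> carrier_mat k k"
  shows "invertible_mat (mink_adj M)" and "mat_inv (mink_adj M) = mink_adj (mat_inv M)"
proof -
  note inv = invertible_mat_inverse[OF assms]
  have carrier: "mink_adj M \<in> carrier_mat k k" "mink_adj (mat_inv M) \<in> carrier_mat k k"
    using M inv(1) mink_adj_carrier by auto
  have inverse: "mink_adj M * mink_adj (mat_inv M) = 1\<^sub>m k" "mink_adj (mat_inv M) * mink_adj M = 1\<^sub>m k"
    using inv M by (simp_all flip: mink_adj_mult)
  show "invertible_mat (mink_adj M)"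
    using invertible_matI[OF carrier inverse] .
  show "mat_inv (mink_adj M) = mink_adj (mat_inv M)"
    using mat_inv_eqI[OF carrier inverse] .
qed

section \<open>The Minkowski inverse of a full-rank factorization\<close>

lemma minkowski_inverse_unique:
  assumes X: "is_minkowski_inverse A X" and Y: "is_minkowski_inverse A Y"
  shows "X = Y"
proof -
  from X have AXA: "A * X * A = A" and XAX: "X * A * X = X"
    and AX: "mink_adj (A * X) = A * X" and XA: "mink_adj (X * A) = X * A"
    and X_dim: "dim_row X = dim_col A" "dim_col X = dim_row A"
    by (auto simp: is_minkowski_inverse_def)
  from Y have AYA: "A * Y * A = A" and YAY: "Y * A * Y = Y"
    and AY: "mink_adj (A * Y) = A * Y" and YA: "mink_adj (Y * A) = Y * A"
    and Y_dim: "dim_row Y = dim_col A" "dim_col Y = dim_row A"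
    by (auto simp: is_minkowski_inverse_def)
  note assoc = assoc_mult_mat_dims X_dim Y_dim
  have X_eq: "X * mink_adj X * mink_adj A = X"
    using XAX AX by (simp add: mink_adj_mult assoc)
  have adj_A_Y: "mink_adj A * A * Y = mink_adj A"
    using arg_cong[OF AYA, of mink_adj] AY by (simp add: mink_adj_mult assoc)
  have Y_eq: "mink_adj A * mink_adj Y * Y = Y"
    using YAY YA by (simp add: mink_adj_mult assoc)
  have X_adj_A: "X * A * mink_adj A = mink_adj A"
    using arg_cong[OF AXA, of mink_adj] XA by (simp add: mink_adj_mult assoc)
  have "X = X * mink_adj X * (mink_adj A * A * Y)"
    using X_eq adj_A_Y by simp
  also have "\<dots> = X * mink_adj X * mink_adj A * A * Y"
    by (simp add: assoc)
  also have "\<dots> = X * A * (mink_adj A * mink_adj Y * Y)"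
    using X_eq Y_eq by simp
  also have "\<dots> = X * A * mink_adj A * mink_adj Y * Y"
    by (simp add: assoc)
  also have "\<dots> = Y"
    using X_adj_A Y_eq by simp
  finally show ?thesis .
qed

lemma minkowski_inverse_eqI:
  "is_minkowski_inverse A X \<Longrightarrow> minkowski_inverse A = X"
  unfolding minkowski_inverse_def by (blast intro: minkowski_inverse_unique)

lemma minkowski_inverse_full_rank_factorization:
  assumes C: "C \<in> carrier_mat m r" and K: "K \<in> carrier_mat r n"
    and G: "invertible_mat (mink_adj C * C)" and H: "invertible_mat (K * mink_adj K)"
  shows "minkowski_inverse (C * K) =
    mink_adj K * mat_inv (K * mink_adj K) * mat_inv (mink_adj C * C) * mink_adj C"
proof -
  define Gi where "Gi = mat_inv (mink_adj C * C)"
  define Hi where "Hi = mat_inv (K * mink_adj K)"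
  have CC: "mink_adj C * C \<in> carrier_mat r r" and KK: "K * mink_adj K \<in> carrier_mat r r"
    using C K by auto
  note Gi = invertible_mat_inverse[OF G CC, folded Gi_def]
  note Hi = invertible_mat_inverse[OF H KK, folded Hi_def]
  have dims: "dim_row C = m" "dim_col C = r" "dim_row K = r" "dim_col K = n"
    "dim_row Gi = r" "dim_col Gi = r" "dim_row Hi = r" "dim_col Hi = r"
    using C K Gi(1) Hi(1) by auto
  note assoc = assoc_mult_mat_dims dims
  have cancel:
    "Gi * (mink_adj C * (C * Z)) = Z" "mink_adj C * (C * (Gi * Z)) = Z"
    "Hi * (K * (mink_adj K * Z)) = Z" "K * (mink_adj K * (Hi * Z)) = Z"
    if "dim_row Z = r" for Z
    using mult_cancel_left_inverse[OF Gi(3), of Z] mult_cancel_left_inverse[OF Gi(2), of Z]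
      mult_cancel_left_inverse[OF Hi(3), of Z] mult_cancel_left_inverse[OF Hi(2), of Z] that
    by (simp_all add: assoc)
  have "mink_adj (mink_adj C * C) = mink_adj C * C" "mink_adj (K * mink_adj K) = K * mink_adj K"
    by (simp_all add: mink_adj_mult dims)
  then have Gi_adj: "mink_adj Gi = Gi" and Hi_adj: "mink_adj Hi = Hi"
    unfolding Gi_def Hi_def by (metis invertible_mat_mink_adj(2)[OF G CC], metis invertible_mat_mink_adj(2)[OF H KK])
  let ?X = "mink_adj K * (Hi * (Gi * mink_adj C))"
  have AX: "C * K * ?X = C * (Gi * mink_adj C)" and XA: "?X * (C * K) = mink_adj K * (Hi * K)"
    by (simp_all add: assoc cancel)
  have "is_minkowski_inverse (C * K) ?X"
    unfolding is_minkowski_inverse_def AX XA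
  proof (intro conjI)
    show "?X \<in> carrier_mat (dim_col (C * K)) (dim_row (C * K))"
      using C K Gi(1) Hi(1) by auto
  qed (simp_all add: assoc cancel mink_adj_mult Gi_adj Hi_adj)
  then show ?thesis
    by (simp add: minkowski_inverse_eqI Gi_def[symmetric] Hi_def[symmetric] assoc)
qed

lemma minkowski_inverse_factorization_formula:
  assumes C: "C \<in> carrier_mat m r" and K: "K \<in> carrier_mat r n"
    and "invertible_mat A1" and A1: "A1 \<in> carrier_mat r r"
    and G: "invertible_mat (mink_adj C * C)" and H: "invertible_mat (K * mink_adj K)"
  shows "minkowski_inverse (C * K) =
    mink_adj (A1 * K) * mat_inv (mink_adj C * (C * K) * mink_adj (A1 * K)) * mink_adj C"
proof -
  have CC: "mink_adj C * C \<in> carrier_mat r r" and KK: "K * mink_adj K \<in> carrier_mat r r"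
    using C K by auto
  have A1': "invertible_mat (mink_adj A1)" "mink_adj A1 \<in> carrier_mat r r"
    using invertible_mat_mink_adj(1)[OF assms(3) A1] A1 by auto
  have dims: "dim_row C = m" "dim_col C = r" "dim_row K = r" "dim_col K = n" "dim_row A1 = r" "dim_col A1 = r"
    using C K A1 by auto
  note inv_dims = carrier_matD[OF invertible_mat_inverse(1)[OF G CC]]
    carrier_matD[OF invertible_mat_inverse(1)[OF H KK]] carrier_matD[OF invertible_mat_inverse(1)[OF A1']]
  have "mink_adj C * (C * K) * mink_adj (A1 * K) = mink_adj C * C * (K * mink_adj K * mink_adj A1)"
    by (simp add: mink_adj_mult assoc_mult_mat_dims dims)
  then have inv: "mat_inv (mink_adj C * (C * K) * mink_adj (A1 * K)) =
      mat_inv (mink_adj A1) * mat_inv (K * mink_adj K) * mat_inv (mink_adj C * C)"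
    using mat_inv_mult[OF H A1'(1) KK A1'(2)] mat_inv_mult(2)[OF G _ CC mult_carrier_mat[OF KK A1'(2)]]
    by simp
  have "mink_adj (A1 * K) * mat_inv (mink_adj C * (C * K) * mink_adj (A1 * K)) * mink_adj C =
      mink_adj K * (mink_adj A1 * mat_inv (mink_adj A1)) * mat_inv (K * mink_adj K) * mat_inv (mink_adj C * C) * mink_adj C"
    unfolding inv using inv_dims by (simp add: mink_adj_mult assoc_mult_mat_dims dims)
  also have "\<dots> = minkowski_inverse (C * K)"
    using minkowski_inverse_full_rank_factorization[OF C K G H] invertible_mat_inverse(2)[OF A1'] K
    by simp
  finally show ?thesis ..
qed

section \<open>Rank\<close>

context vec_space
begin

lemma rank_mult_le_left:
  assumes M: "M \<in> carrier_mat n c" and B: "B \<in> carrier_mat c d"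
  shows "rank (M * B) \<le> rank M"
proof -
  have MB: "M * B \<in> carrier_mat n d"
    using M B by auto
  have "col_space (M * B) \<subseteq> col_space M"
  proof
    fix y assume "y \<in> col_space (M * B)"
    then obtain x where x: "x \<in> carrier_vec d" and y: "y = M *\<^sub>v (B *\<^sub>v x)"
      unfolding col_space_eq[OF MB] using MB B M by (auto simp: assoc_mult_mat_vec)
    then show "y \<in> col_space M"
      unfolding col_space_eq[OF M] using M B by auto
  qed
  moreover have sub: "VectorSpace.subspace class_ring (col_space A) V" if "A \<in> carrier_mat n e" for A e
    unfolding col_space_def using that by (metis cols_dim carrier_matD(1) span_is_subspace)
  moreover have "vectorspace.fin_dim class_ring (vs (col_space A))" if "A \<in> carrier_mat n e" for A e
    unfolding col_space_def using fin_dim_span_cols[OF that] .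
  ultimately have "vectorspace.dim class_ring (vs (col_space (M * B))) \<le> vectorspace.dim class_ring (vs (col_space M))"
    using vectorspace.subspace_dim[OF subspace_is_vs[OF sub[OF M]] nested_subspaces[OF sub[OF M] sub[OF MB]]] M MB
    by simp
  then show ?thesis
    unfolding rank_def col_space_def .
qed

lemma rank_less_if_kernel_nontrivial:
  assumes M: "M \<in> carrier_mat n c"
    and v: "v \<in> carrier_vec c" "v \<noteq> 0\<^sub>v c" "M *\<^sub>v v = 0\<^sub>v n"
  shows "rank M < c"
proof (cases "distinct (cols M)")
  case True
  then have "lin_dep (set (cols M))"
    using lin_depI[OF M v] by blast
  with True M show ?thesis
    using rank_le_nc[OF M] full_rank_lin_indpt[OF M] by fastforce
next
  case False
  obtain S where S: "maximal S (\<lambda>T. T \<subseteq> set (cols M) \<and> lin_indpt T)"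
    using maximal_exists[of "\<lambda>T. T \<subseteq> set (cols M) \<and> lin_indpt T" "card (set (cols M))" "{}"]
    by (meson List.finite_set card_mono empty_iff empty_subsetI finite_lin_indpt2 rev_finite_subset)
  then have "card S \<le> card (set (cols M))"
    by (simp add: card_mono maximal_def)
  moreover have "card (set (cols M)) < c"
    using False M card_distinct[of "cols M"] card_length[of "cols M"] by fastforce
  ultimately show ?thesis
    using rank_card_indpt[OF M S] by simp
qed

end

lemma invertible_mat_if_rank_of_product:
  fixes P :: "'a :: field mat"
  assumes P: "P \<in> carrier_mat r r" and L: "L \<in> carrier_mat k r" and R: "R \<in> carrier_mat r d"
    and rank: "vec_space.rank k (L * P * R) = r"
  shows "invertible_mat P"
proof (rule invertible_mat_if_det_nonzero[OF P], rule notI)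
  assume "det P = 0"
  then obtain v where v: "v \<in> carrier_vec r" "v \<noteq> 0\<^sub>v r" "P *\<^sub>v v = 0\<^sub>v r"
    using det_0_iff_vec_prod_zero_field[OF P] by blast
  have LP: "L * P \<in> carrier_mat k r"
    using L P by auto
  have "(L * P) *\<^sub>v v = 0\<^sub>v k"
    using L P v by (auto simp: assoc_mult_mat_vec)
  then have "vec_space.rank k (L * P) < r"
    using vec_space.rank_less_if_kernel_nontrivial[OF LP v(1,2)] by simp
  with vec_space.rank_mult_le_left[OF LP R] rank show False
    by simp
qed

lemma invertible_gram_of_full_rank_factorization:
  assumes C: "C \<in> carrier_mat m r" and K: "K \<in> carrier_mat r n"
    and rank_right: "mrank (C * K * mink_adj (C * K)) = r"
    and rank_left: "mrank (mink_adj (C * K) * (C * K)) = r"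
  shows "invertible_mat (mink_adj C * C)" and "invertible_mat (K * mink_adj K)"
proof -
  have dims: "dim_row C = m" "dim_col C = r" "dim_row K = r" "dim_col K = n"
    using C K by auto
  show "invertible_mat (mink_adj C * C)"
  proof (rule invertible_mat_if_rank_of_product)
    show "vec_space.rank n (mink_adj K * (mink_adj C * C) * K) = r"
      using rank_left unfolding mrank_def by (simp add: mink_adj_mult assoc_mult_mat_dims dims)
  qed (use C K in auto)
  show "invertible_mat (K * mink_adj K)"
  proof (rule invertible_mat_if_rank_of_product)
    show "vec_space.rank m (C * (K * mink_adj K) * mink_adj C) = r"
      using rank_right unfolding mrank_def by (simp add: mink_adj_mult assoc_mult_mat_dims dims)
  qed (use C K in auto)
qed

context vec_space
begin

lemma lin_indpt_cols_if_kernel_trivial: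
  assumes C: "C \<in> carrier_mat n r"
    and ker: "\<And>v. v \<in> carrier_vec r \<Longrightarrow> C *\<^sub>v v = 0\<^sub>v n \<Longrightarrow> v = 0\<^sub>v r"
  shows "distinct (cols C)" and "lin_indpt (set (cols C))"
proof -
  show dist: "distinct (cols C)"
  proof (rule ccontr)
    assume "\<not> distinct (cols C)"
    then obtain i j where ij: "i \<noteq> j" "i < r" "j < r" "col C i = col C j"
      using C by (auto simp: distinct_conv_nth)
    define v :: "'a vec" where "v = unit_vec r i - unit_vec r j"
    have "C *\<^sub>v unit_vec r l = col C l" if "l < r" for l
      using C that by (intro eq_vecI) auto
    with C ij have "C *\<^sub>v v = 0\<^sub>v n"
      unfolding v_def by (simp add: mult_minus_distrib_mat_vec)
    then have "v = 0\<^sub>v r"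
      by (rule ker[rotated]) (simp add: v_def)
    moreover have "v $ i = 1"
      unfolding v_def using ij by auto
    ultimately show False
      using ij by simp
  qed
  show "lin_indpt (set (cols C))"
    using lin_depE[OF C _ dist] ker by metis
qed

lemma cols_in_col_space_if_rank_eq:
  assumes A: "A \<in> carrier_mat n c" and C: "C \<in> carrier_mat n r"
    and cols: "set (cols C) \<subseteq> set (cols A)"
    and ker: "\<And>v. v \<in> carrier_vec r \<Longrightarrow> C *\<^sub>v v = 0\<^sub>v n \<Longrightarrow> v = 0\<^sub>v r"
    and rank: "rank A = r"
  shows "set (cols A) \<subseteq> col_space C"
proof
  fix w assume w: "w \<in> set (cols A)"
  note indpt = lin_indpt_cols_if_kernel_trivial[OF C ker]
  show "w \<in> col_space C"
  proof (rule ccontr)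
    assume span: "w \<notin> col_space C"
    have C_carrier: "set (cols C) \<subseteq> carrier_vec n" and "w \<in> carrier_vec n"
      using w A C cols_dim by blast+
    moreover have w_new: "w \<notin> set (cols C)"
      using span in_own_span[OF C_carrier] unfolding col_space_def by blast
    ultimately have "lin_indpt (set (cols C) \<union> {w})"
      using lin_dep_iff_in_span[OF C_carrier indpt(2)] span unfolding col_space_def by simp
    moreover have "card (set (cols C)) = r"
      using C indpt(1) distinct_card by fastforce
    ultimately have "r + 1 \<le> rank A"
      using rank_ge_card_indpt[OF A, of "set (cols C) \<union> {w}"] w w_new cols by simp
    with rank show False
      by simp
  qed
qed

lemma exists_factor_if_cols_in_col_space:
  assumes A: "A \<in> carrier_mat n c" and C: "C \<in> carrier_mat n r"
    and cols: "set (cols A) \<subseteq> col_space C"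
  shows "\<exists>K \<in> carrier_mat r c. A = C * K"
proof -
  have "\<exists>x \<in> carrier_vec r. C *\<^sub>v x = col A j" if "j < c" for j
  proof -
    have "col A j \<in> set (cols A)"
      using A that by (simp add: cols_def)
    with cols C show ?thesis
      unfolding col_space_eq[OF C] by auto
  qed
  then obtain x where x: "\<And>j. j < c \<Longrightarrow> x j \<in> carrier_vec r \<and> C *\<^sub>v x j = col A j"
    by metis
  define K where "K = mat r c (\<lambda>(i, j). x j $ i)"
  have K: "K \<in> carrier_mat r c"
    unfolding K_def by simp
  have col_K: "col K j = x j" if "j < c" for j
    unfolding K_def using x[OF that] that by (auto intro!: eq_vecI)
  have "A = C * K"
  proof (rule eq_matI)
    fix i j assume "i < dim_row (C * K)" "j < dim_col (C * K)"
    with C K have i: "i < n" and j: "j < c"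
      by auto
    with C K have "(C * K) $$ (i, j) = (C *\<^sub>v col K j) $ i"
      by simp
    also have "\<dots> = A $$ (i, j)"
      using A i j x[OF j] col_K[OF j] by simp
    finally show "A $$ (i, j) = (C * K) $$ (i, j)" ..
  qed (use A C K in auto)
  with K show ?thesis
    by blast
qed

end

section \<open>Block matrices\<close>

lemma append_rows_kernel_trivial:
  fixes A1 A3 :: "complex mat"
  assumes "invertible_mat A1" and A1: "A1 \<in> carrier_mat r r" and A3: "A3 \<in> carrier_mat k r"
    and v: "v \<in> carrier_vec r" and zero: "(A1 @\<^sub>r A3) *\<^sub>v v = 0\<^sub>v (r + k)"
  shows "v = 0\<^sub>v r"
proof -
  have "(A1 *\<^sub>v v) @\<^sub>v (A3 *\<^sub>v v) = 0\<^sub>v r @\<^sub>v 0\<^sub>v k"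
    using zero mat_mult_append[OF A1 A3 v] by auto
  then have "A1 *\<^sub>v v = 0\<^sub>v r"
    using A1 v append_vec_eq[of "A1 *\<^sub>v v" r "0\<^sub>v r"] by auto
  then have "mat_inv A1 *\<^sub>v (A1 *\<^sub>v v) = 0\<^sub>v r"
    using invertible_mat_inverse(1)[OF assms(1) A1] by auto
  then show ?thesis
    using invertible_mat_inverse[OF assms(1) A1] A1 v by (simp flip: assoc_mult_mat_vec)
qed

lemma cols_append_rows_subset:
  assumes A1: "A1 \<in> carrier_mat r r" and A2: "A2 \<in> carrier_mat r c"
    and A3: "A3 \<in> carrier_mat k r" and A4: "A4 \<in> carrier_mat k c"
  shows "set (cols (A1 @\<^sub>r A3)) \<subseteq> set (cols (four_block_mat A1 A2 A3 A4))"
proof -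
  have "col (A1 @\<^sub>r A3) j = col (four_block_mat A1 A2 A3 A4) j" if j: "j < r" for j
  proof -
    have "col (A1 @\<^sub>r A3) j = col A1 j @\<^sub>v col A3 j"
      unfolding append_rows_def using A1 A3
      by (intro col_four_block_mat(1)[OF _ zero_carrier_mat _ zero_carrier_mat j]) auto
    also have "\<dots> = col (four_block_mat A1 A2 A3 A4) j"
      by (rule col_four_block_mat(1)[OF A1 A2 A3 A4 j, symmetric])
    finally show ?thesis .
  qed
  moreover have "dim_col (A1 @\<^sub>r A3) = r"
    using carrier_append_rows[OF A1 A3] by auto
  ultimately show ?thesis
    using A1 A4 unfolding cols_def by auto
qed

lemma row_block_eq_if_four_block_mat_eq:
  assumes A1: "A1 \<in> carrier_mat r r" and A2: "A2 \<in> carrier_mat r c"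
    and A3: "A3 \<in> carrier_mat k r" and A4: "A4 \<in> carrier_mat k c"
    and K: "K \<in> carrier_mat r (r + c)"
    and eq: "four_block_mat A1 A2 A3 A4 = (A1 @\<^sub>r A3) * K"
  shows "row_block A1 A2 = A1 * K"
proof (rule eq_matI)
  fix i j assume "i < dim_row (A1 * K)" "j < dim_col (A1 * K)"
  with A1 K have i: "i < r" and j: "j < r + c"
    by auto
  have "row (A1 @\<^sub>r A3) i = row A1 i"
    using i A1 A3 by (intro eq_vecI) (auto simp: append_rows_def)
  moreover have "dim_row (A1 @\<^sub>r A3) = r + k" "dim_col (A1 @\<^sub>r A3) = r"
    using carrier_append_rows[OF A1 A3] by auto
  ultimately have "(A1 * K) $$ (i, j) = ((A1 @\<^sub>r A3) * K) $$ (i, j)"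
    using i j A1 K by simp
  also have "\<dots> = row_block A1 A2 $$ (i, j)"
    using i j A1 A2 A3 A4 by (simp add: eq[symmetric] row_block_def)
  finally show "row_block A1 A2 $$ (i, j) = (A1 * K) $$ (i, j)" ..
qed (use A1 A2 K in \<open>simp_all add: row_block_def\<close>)

lemma leading_columns_factorization:
  fixes A1 A2 A3 A4 :: "complex mat"
  assumes blocks: "A1 \<in> carrier_mat r r" "A2 \<in> carrier_mat r c" "A3 \<in> carrier_mat k r" "A4 \<in> carrier_mat k c"
    and "invertible_mat A1" and rank: "mrank (four_block_mat A1 A2 A3 A4) = r"
  obtains K where "K \<in> carrier_mat r (r + c)"
    and "four_block_mat A1 A2 A3 A4 = (A1 @\<^sub>r A3) * K" and "row_block A1 A2 = A1 * K"
proof -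
  let ?A = "four_block_mat A1 A2 A3 A4" and ?C = "A1 @\<^sub>r A3"
  have A: "?A \<in> carrier_mat (r + k) (r + c)" and C: "?C \<in> carrier_mat (r + k) r"
    using blocks by auto
  have "vec_space.rank (r + k) ?A = r"
    using rank blocks unfolding mrank_def by simp
  then have "set (cols ?A) \<subseteq> vec_space.col_space (r + k) ?C"
    using vec_space.cols_in_col_space_if_rank_eq[OF A C cols_append_rows_subset[OF blocks]]
      append_rows_kernel_trivial[OF assms(5) blocks(1,3)] by blast
  then obtain K where "K \<in> carrier_mat r (r + c)" and "?A = ?C * K"
    using vec_space.exists_factor_if_cols_in_col_space[OF A C] by blast
  with row_block_eq_if_four_block_mat_eq[OF blocks] show thesis
    by (blast intro: that)
qed

theorem theorem8p5:
  fixes A A1 A2 A3 A4 :: "complex mat" and m n r :: nat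
  assumes "A \<in> carrier_mat m n"
    and "mrank A = r"
    and "mrank (A * mink_adj A) = r"
    and "mrank (mink_adj A * A) = r"
    and "A1 \<in> carrier_mat r r" and "A2 \<in> carrier_mat r (n - r)"
    and "A3 \<in> carrier_mat (m - r) r" and "A4 \<in> carrier_mat (m - r) (n - r)"
    and "A = four_block_mat A1 A2 A3 A4"
    and "invertible_mat A1"
  shows "minkowski_inverse A =
    mink_adj (row_block A1 A2)
    * mat_inv (mink_adj (A1 @\<^sub>r A3) * A * mink_adj (row_block A1 A2))
    * mink_adj (A1 @\<^sub>r A3)"
proof -
  \<comment> \<open>The shape of A is fixed by its block decomposition.\<close>
  note blocks = assms(5-8) and A_blocks = assms(9)
  obtain K where K: "K \<in> carrier_mat r (r + (n - r))"
    and A_CK: "A = (A1 @\<^sub>r A3) * K" and R: "row_block A1 A2 = A1 * K"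
    using leading_columns_factorization[OF blocks assms(10)] assms(2) unfolding A_blocks by metis
  have C: "A1 @\<^sub>r A3 \<in> carrier_mat (r + (m - r)) r"
    using blocks by auto
  note grams = invertible_gram_of_full_rank_factorization[OF C K assms(3,4)[unfolded A_CK]]
  show ?thesis
    unfolding R A_CK
    by (rule minkowski_inverse_factorization_formula[OF C K assms(10,5) grams])
qed

end
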